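(* Let $f:\mathbb{R}^d \to \mathbb{R}$ be concave, with hypograph $f^- = \{(u;z) \in \mathbb{R}^{d+1} : z \leq f(u)\}$. Let $x \in f^-$ and $\lambda \geq 0$. Then for all $y \in M^{\lambda}_{f^-}(x)$ with $y \in f^-$, $$(1 - \lambda)\cdot \mathrm{ray}_{f^-}(x) \leq \mathrm{ray}_{f^-}(y) \leq (1 + \lambda)\cdot \mathrm{ray}_{f^-}(x).$$
   Context: For a point $w = (u;z) \in f^-$, the ray distance $\mathrm{ray}_{f^-}(w) = f(u) - z$ is the length of the segment from $w$ vertically upward (in the direction of the last coordinate) to the boundary of $f^-$. For a convex set $K$, $p \in K$ and $\lambda \geq 0$, the $\lambda$-scaled Macbeath region is $M^{\lambda}_K(p) = p + \lambda\big((K - p) \cap (p - K)\big)$. *)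

theory Defs
  imports "HOL-Analysis.Analysis"
begin

text \<open>Points of R^(d+1) are represented as pairs (u, z) with u in R^d and z in R.\<close>

definition hypo :: "((real^'n) \<Rightarrow> real) \<Rightarrow> ((real^'n) \<times> real) set"
  where "hypo f = {w. snd w \<le> f (fst w)}"

definition ray_dist :: "((real^'n) \<Rightarrow> real) \<Rightarrow> (real^'n) \<times> real \<Rightarrow> real"
  where "ray_dist f w = f (fst w) - snd w"

definition macbeath :: "'a::real_vector set \<Rightarrow> real \<Rightarrow> 'a \<Rightarrow> 'a set"
  where "macbeath K lam p =
     (\<lambda>q. p + lam *\<^sub>R q) ` ((\<lambda>k. k - p) ` K \<inter> (\<lambda>k. p - k) ` K)"

end

theory Submission
  imports Defs
begin

text \<open>The ray distance is the concave function g(u, z) = f u - z, and the hypograph is its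
  superlevel set {g \<ge> 0}. If x \<plusminus> q lie in this set and y = x + \<lambda>q, then x is the
  convex combination (y + \<lambda>(x - q)) / (1 + \<lambda>), which gives g y \<le> (1 + \<lambda>) g x.
  For \<lambda> \<le> 1, y is the convex combination (1 - \<lambda>) x + \<lambda> (x + q), which gives
  g y \<ge> (1 - \<lambda>) g x; for \<lambda> > 1 that bound is trivial, its left side being nonpositive.\<close>

lemma mem_macbeath_iff:
  "y \<in> macbeath K lam p \<longleftrightarrow> (\<exists>q. p + q \<in> K \<and> p - q \<in> K \<and> y = p + lam *\<^sub>R q)"
proof
  assume "y \<in> macbeath K lam p"
  then obtain k k' where "k \<in> K" "k' \<in> K" "k - p = p - k'" "y = p + lam *\<^sub>R (k - p)"
    unfolding macbeath_def by auto
  moreover have "p + (k - p) = k" by simp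
  moreover from \<open>k - p = p - k'\<close> have "p - (k - p) = k'"
    by (simp add: algebra_simps)
  ultimately show "\<exists>q. p + q \<in> K \<and> p - q \<in> K \<and> y = p + lam *\<^sub>R q"
    by metis
next
  assume "\<exists>q. p + q \<in> K \<and> p - q \<in> K \<and> y = p + lam *\<^sub>R q"
  then obtain q where "p + q \<in> K" "p - q \<in> K" "y = p + lam *\<^sub>R q" by blast
  moreover have "q = (p + q) - p" "q = p - (p - q)" by simp_all
  ultimately have "q \<in> (\<lambda>k. k - p) ` K \<inter> (\<lambda>k. p - k) ` K" by blast
  with \<open>y = p + lam *\<^sub>R q\<close> show "y \<in> macbeath K lam p"
    unfolding macbeath_def by blast
qed

lemma concave_step_upper_bound:
  fixes g :: "'a::real_vector \<Rightarrow> real"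
  assumes "concave_on UNIV g" and "lam \<ge> 0" and "g (x - q) \<ge> 0"
  shows "g (x + lam *\<^sub>R q) \<le> (1 + lam) * g x"
proof -
  define t where "t = lam / (1 + lam)"
  have t: "0 \<le> t" "t \<le> 1" "1 - t = 1 / (1 + lam)"
    using assms(2) by (auto simp: t_def field_simps)
  have coeffs: "(1 + lam) * (1 - t) = 1" "(1 + lam) * t = lam"
    using assms(2) by (simp_all add: t_def field_simps)
  have "(1 + lam) *\<^sub>R ((1 - t) *\<^sub>R (x + lam *\<^sub>R q) + t *\<^sub>R (x - q))
      = (x + lam *\<^sub>R q) + lam *\<^sub>R (x - q)"
    by (simp only: scaleR_add_right[of "1 + lam"] scaleR_scaleR coeffs scaleR_one)
  also have "\<dots> = (1 + lam) *\<^sub>R x"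
    by (simp add: algebra_simps)
  finally have "(1 - t) *\<^sub>R (x + lam *\<^sub>R q) + t *\<^sub>R (x - q) = x"
    using assms(2) by simp
  then have "(1 - t) * g (x + lam *\<^sub>R q) + t * g (x - q) \<le> g x"
    using concave_onD[OF assms(1) t(1,2)] by (metis UNIV_I)
  moreover have "t * g (x - q) \<ge> 0"
    using t(1) assms(3) by simp
  ultimately have "g (x + lam *\<^sub>R q) / (1 + lam) \<le> g x"
    by (simp add: t(3))
  then show ?thesis
    using assms(2) by (simp add: divide_le_eq mult.commute)
qed

lemma concave_step_lower_bound:
  fixes g :: "'a::real_vector \<Rightarrow> real"
  assumes "concave_on UNIV g" and "lam \<ge> 0"
    and "g x \<ge> 0" and "g (x + q) \<ge> 0" and "g (x + lam *\<^sub>R q) \<ge> 0"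
  shows "(1 - lam) * g x \<le> g (x + lam *\<^sub>R q)"
proof (cases "lam \<le> 1")
  case True
  have "(1 - lam) *\<^sub>R x + lam *\<^sub>R (x + q) = x + lam *\<^sub>R q"
    by (simp add: algebra_simps)
  then have "(1 - lam) * g x + lam * g (x + q) \<le> g (x + lam *\<^sub>R q)"
    using concave_onD[OF assms(1) assms(2) True] by (metis UNIV_I)
  moreover have "lam * g (x + q) \<ge> 0"
    using assms(2,4) by simp
  ultimately show ?thesis by linarith
next
  case False
  then have "(1 - lam) * g x \<le> 0"
    using assms(3) by (simp add: mult_nonpos_nonneg)
  with assms(5) show ?thesis by linarith
qed

lemma concave_superlevel_macbeath_bounds:
  fixes g :: "'a::real_vector \<Rightarrow> real"
  assumes "concave_on UNIV g" and "lam \<ge> 0"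
    and "x \<in> {w. g w \<ge> 0}" and "y \<in> macbeath {w. g w \<ge> 0} lam x" and "y \<in> {w. g w \<ge> 0}"
  shows "(1 - lam) * g x \<le> g y \<and> g y \<le> (1 + lam) * g x"
proof -
  obtain q where "g (x + q) \<ge> 0" "g (x - q) \<ge> 0" "y = x + lam *\<^sub>R q"
    using assms(4) unfolding mem_macbeath_iff by auto
  then show ?thesis
    using assms concave_step_lower_bound concave_step_upper_bound by auto
qed

lemma concave_on_ray_dist:
  assumes "concave_on UNIV f"
  shows "concave_on UNIV (ray_dist f)"
proof -
  have "concave_on UNIV (\<lambda>w. f (fst w))"
    using assms by (simp add: concave_on_iff)
  moreover have "convex_on UNIV (snd :: (real^'n) \<times> real \<Rightarrow> real)"
    by (simp add: convex_on_def)
  ultimately show ?thesis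
    unfolding ray_dist_def[abs_def] by (rule concave_on_diff)
qed

lemma hypo_eq_ray_dist_nonneg: "hypo f = {w. ray_dist f w \<ge> 0}"
  by (auto simp: hypo_def ray_dist_def)

theorem lemma10:
  fixes f :: "real^'n \<Rightarrow> real" and x y :: "(real^'n) \<times> real" and lam :: real
  assumes "concave_on UNIV f"
    and "x \<in> hypo f"
    and "lam \<ge> 0"
    and "y \<in> macbeath (hypo f) lam x"
    and "y \<in> hypo f"
  shows "(1 - lam) * ray_dist f x \<le> ray_dist f y \<and> ray_dist f y \<le> (1 + lam) * ray_dist f x"
  using concave_superlevel_macbeath_bounds[OF concave_on_ray_dist[OF assms(1)] assms(3)]
    assms(2,4,5) unfolding hypo_eq_ray_dist_nonneg by blast

end
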